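(* Let $1\le r\le n$, let $I=(x_1,\ldots,x_r)\subset S=K[x_1,\ldots,x_n]$, and let $J\subsetneq I$ be a nonzero square free monomial ideal generated by square free monomials of degrees $\geq 2$. Suppose every square free monomial of degree $2$ lying in $I\setminus J$ belongs to $K[x_1,\ldots,x_r]$. Then $\operatorname{depth}_S I/J=1$ (no assumption relating $r$ and the number of such degree-$2$ monomials is needed).
   Context: $S=K[x_1,\ldots,x_n]$ is the polynomial ring over a field $K$; depth is taken over $S$. *)

theory Defs
  imports "HOL-Library.Poly_Mapping"
begin

text \<open>Polynomials over a field K in the variables x_0, x_1, ... are elements of
  (nat =>0 nat) =>0 K (monomial exponent vector |-> coefficient).
  The polynomial ring S = K[x_1,...,x_n] is the subring of polynomials whose
  monomials only involve the variables with index < n (variable x_(i+1) of the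
  paper is index i here).\<close>

type_synonym 'a mpoly = "(nat \<Rightarrow>\<^sub>0 nat) \<Rightarrow>\<^sub>0 'a"

definition polyring :: "nat \<Rightarrow> 'a::field mpoly set" where
  "polyring n = {p. \<forall>m \<in> Poly_Mapping.keys p. Poly_Mapping.keys m \<subseteq> {..<n}}"

definition var :: "nat \<Rightarrow> 'a::field mpoly" where
  "var i = Poly_Mapping.single (Poly_Mapping.single i 1) 1"

definition monom :: "(nat \<Rightarrow>\<^sub>0 nat) \<Rightarrow> 'a::field mpoly" where
  "monom m = Poly_Mapping.single m 1"

definition mdeg :: "(nat \<Rightarrow>\<^sub>0 nat) \<Rightarrow> nat" where
  "mdeg m = (\<Sum>i\<in>Poly_Mapping.keys m. Poly_Mapping.lookup m i)"

definition sqfree :: "(nat \<Rightarrow>\<^sub>0 nat) \<Rightarrow> bool" where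
  "sqfree m \<longleftrightarrow> (\<forall>i. Poly_Mapping.lookup m i \<le> 1)"

definition ideal_gen :: "nat \<Rightarrow> 'a::field mpoly set \<Rightarrow> 'a mpoly set" where
  "ideal_gen n G = {\<Sum>g\<in>F. c g * g | F c. finite F \<and> F \<subseteq> G \<and> (\<forall>g\<in>F. c g \<in> polyring n)}"

definition seq_times :: "'a::field mpoly list \<Rightarrow> 'a mpoly set \<Rightarrow> 'a mpoly set" where
  "seq_times fs M = {\<Sum>j<length fs. fs ! j * u j | u. \<forall>j<length fs. u j \<in> M}"

definition set_plus :: "'a::field mpoly set \<Rightarrow> 'a mpoly set \<Rightarrow> 'a mpoly set" where
  "set_plus A B = {a + b | a b. a \<in> A \<and> b \<in> B}"

text \<open>fs is a regular sequence on the S-module I/J (J \<subseteq> I ideals of S), with all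
  elements in the maximal ideal (x_1,...,x_n):  each f_i is a nonzerodivisor on
  (I/J)/(f_1..f_(i-1))(I/J) and (I/J) \<noteq> (f_1..f_k)(I/J).\<close>
definition quot_regular_seq :: "nat \<Rightarrow> 'a::field mpoly set \<Rightarrow> 'a mpoly set \<Rightarrow> 'a mpoly list \<Rightarrow> bool" where
  "quot_regular_seq n I J fs \<longleftrightarrow>
     (\<forall>f \<in> set fs. f \<in> ideal_gen n (var ` {..<n})) \<and>
     (\<forall>i<length fs. \<forall>u\<in>I.
        fs ! i * u \<in> set_plus J (seq_times (take i fs) I) \<longrightarrow> u \<in> set_plus J (seq_times (take i fs) I)) \<and>
     \<not> I \<subseteq> set_plus J (seq_times fs I)"

definition depth_quot :: "nat \<Rightarrow> 'a::field mpoly set \<Rightarrow> 'a mpoly set \<Rightarrow> nat" where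
  "depth_quot n I J = Sup {length fs | fs. quot_regular_seq n I J fs}"

end

theory Submission
  imports Defs
begin

(* Let I = (x_1,...,x_r) and let J be the ideal of S generated by a set Gm of square free
   monomials of degree >= 2, such that x_i x_j lies in J whenever i <= r < j (this is what the
   hypothesis on the square free degree-2 monomials of I outside J says).

   A polynomial lies in the monomial ideal J iff each of its monomials is divisible by a
   generator; most arguments below split a polynomial into its part inside J and the rest.

   depth >= 1:  f = x_1 + ... + x_r is I/J-regular.  If f u is in J and u0 is the part of u
   outside J, take a monomial mu of u0 with maximal exponent of a variable x_i dividing it; then
   x_i mu survives in f u0, so a generator g divides x_i mu, and since g is square free, g divides
   mu, a contradiction.  Moreover x_1 is not in J + fI, for degree reasons.

   depth <= 1:  for a regular pair f1, f2, split f_k into its part in K[x_1..x_r] and the rest;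
   the rest multiplies I into J.  This yields f2 a in J + f1 I for the first part a of f1, hence
   a = j + f1 v, so a - a v is in J, and a graded Nakayama argument (minimal-degree monomials)
   gives a in J.  Then f1 x_1 is in J, so x_1 is in J, which is impossible. *)

definition mdvd :: "(nat \<Rightarrow>\<^sub>0 nat) \<Rightarrow> (nat \<Rightarrow>\<^sub>0 nat) \<Rightarrow> bool" where
  "mdvd g m \<longleftrightarrow> (\<forall>i. Poly_Mapping.lookup g i \<le> Poly_Mapping.lookup m i)"

lemma mdvd_trans: "mdvd a b \<Longrightarrow> mdvd b c \<Longrightarrow> mdvd a c"
  unfolding mdvd_def by (meson order_trans)

lemma mdvd_add_right: "mdvd g x \<Longrightarrow> mdvd g (x + y)"
  unfolding mdvd_def by (metis lookup_add trans_le_add1)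

lemma mdvd_var: "mdvd (Poly_Mapping.single i 1) \<mu> \<longleftrightarrow> 0 < Poly_Mapping.lookup \<mu> i"
  unfolding mdvd_def by (auto simp: lookup_single when_def)

lemma sqfree_mdvd_cancel:
  assumes "sqfree g" "mdvd g (Poly_Mapping.single i 1 + \<mu>)" "0 < Poly_Mapping.lookup \<mu> i"
  shows "mdvd g \<mu>"
  unfolding mdvd_def
proof
  fix k
  show "Poly_Mapping.lookup g k \<le> Poly_Mapping.lookup \<mu> k"
  proof (cases "k = i")
    case True
    then show ?thesis using assms(1,3) unfolding sqfree_def by (metis One_nat_def Suc_leI order_trans)
  next
    case False
    then show ?thesis using assms(2) unfolding mdvd_def
      by (metis add_0 lookup_add lookup_single_not_eq)
  qed
qed

lemma keys_add_nat:
  "Poly_Mapping.keys ((a::nat \<Rightarrow>\<^sub>0 nat) + b) = Poly_Mapping.keys a \<union> Poly_Mapping.keys b"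
  by (auto simp: in_keys_iff lookup_add)

lemma mdeg_superset:
  "finite A \<Longrightarrow> Poly_Mapping.keys m \<subseteq> A \<Longrightarrow> mdeg m = (\<Sum>i\<in>A. Poly_Mapping.lookup m i)"
  unfolding mdeg_def by (rule sum.mono_neutral_left) (auto simp: in_keys_iff)

lemma mdeg_add: "mdeg (a + b) = mdeg a + mdeg b"
proof -
  let ?A = "Poly_Mapping.keys a \<union> Poly_Mapping.keys b"
  have "mdeg (a + b) = (\<Sum>i\<in>?A. Poly_Mapping.lookup (a + b) i)"
    by (rule mdeg_superset) (auto simp: keys_add_nat)
  also have "\<dots> = (\<Sum>i\<in>?A. Poly_Mapping.lookup a i) + (\<Sum>i\<in>?A. Poly_Mapping.lookup b i)"
    by (simp add: lookup_add sum.distrib)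
  also have "\<dots> = mdeg a + mdeg b"
    using mdeg_superset[of ?A a] mdeg_superset[of ?A b] by simp
  finally show ?thesis .
qed

lemma mdeg_pos: "m \<noteq> 0 \<Longrightarrow> 1 \<le> mdeg m"
proof -
  assume "m \<noteq> 0"
  then obtain i where i: "i \<in> Poly_Mapping.keys m" by (metis keys_eq_empty ex_in_conv)
  have "Poly_Mapping.lookup m i \<le> mdeg m" unfolding mdeg_def by (rule member_le_sum) (use i in auto)
  with i show ?thesis by (simp add: in_keys_iff)
qed

lemma mdeg_mono: "mdvd g m \<Longrightarrow> mdeg g \<le> mdeg m"
proof -
  assume d: "mdvd g m"
  have "Poly_Mapping.keys g \<subseteq> Poly_Mapping.keys m"
    using d unfolding mdvd_def by (metis in_keys_iff le_zero_eq subsetI)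
  then have "mdeg g = (\<Sum>i\<in>Poly_Mapping.keys m. Poly_Mapping.lookup g i)" by (simp add: mdeg_superset)
  also have "\<dots> \<le> mdeg m" unfolding mdeg_def by (rule sum_mono) (use d in \<open>auto simp: mdvd_def\<close>)
  finally show ?thesis .
qed

lemma mdeg_var [simp]: "mdeg (Poly_Mapping.single i 1) = 1" "mdeg (Poly_Mapping.single i (Suc 0)) = 1"
  by (simp_all add: mdeg_def)

definition restr :: "'a::field mpoly \<Rightarrow> (nat \<Rightarrow>\<^sub>0 nat) set \<Rightarrow> 'a mpoly" where
  "restr p A = Abs_poly_mapping (\<lambda>k. if k \<in> A then Poly_Mapping.lookup p k else 0)"

lemma lookup_restr:
  "Poly_Mapping.lookup (restr p A) k = (if k \<in> A then Poly_Mapping.lookup p k else 0)"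
proof -
  have "finite {k. (if k \<in> A then Poly_Mapping.lookup p k else 0) \<noteq> 0}"
    by (rule finite_subset[of _ "Poly_Mapping.keys p"]) (auto simp: in_keys_iff)
  then show ?thesis unfolding restr_def by simp
qed

lemma keys_restr: "Poly_Mapping.keys (restr p A) = Poly_Mapping.keys p \<inter> A"
  by (auto simp: in_keys_iff lookup_restr split: if_splits)

lemma restr_split: "p = restr p A + restr p (- A)"
  by (rule poly_mapping_eqI) (simp add: lookup_add lookup_restr)

lemma poly_sum_singles:
  "p = (\<Sum>k\<in>Poly_Mapping.keys p. Poly_Mapping.single k (Poly_Mapping.lookup p k))"
  by (rule poly_mapping_eqI) (simp add: lookup_sum lookup_single when_def in_keys_iff)

lemma keys_var: "Poly_Mapping.keys (var j :: 'a::field mpoly) = {Poly_Mapping.single j 1}"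
  by (simp add: var_def)

lemma lookup_single_mult:
  fixes p :: "'a::field mpoly"
  shows "Poly_Mapping.lookup (Poly_Mapping.single t c * p) (t + s) = c * Poly_Mapping.lookup p s"
proof -
  have restr_s: "restr p {s} = Poly_Mapping.single s (Poly_Mapping.lookup p s)"
    by (rule poly_mapping_eqI) (simp add: lookup_restr lookup_single when_def)
  have "t + s \<notin> Poly_Mapping.keys (Poly_Mapping.single t c * restr p (- {s}))"
    using keys_mult[of "Poly_Mapping.single t c" "restr p (- {s})"]
    by (auto simp: keys_restr split: if_splits)
  then have rest: "Poly_Mapping.lookup (Poly_Mapping.single t c * restr p (- {s})) (t + s) = 0"
    by (simp add: in_keys_iff)
  have "Poly_Mapping.single t c * p = Poly_Mapping.single (t + s) (c * Poly_Mapping.lookup p s)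
          + Poly_Mapping.single t c * restr p (- {s})"
    by (subst restr_split[of p "{s}"]) (simp add: distrib_left restr_s mult_single)
  then show ?thesis using rest by (simp add: lookup_add)
qed

lemma lookup_sum_vars_mult:
  fixes u :: "'a::field mpoly"
  assumes "finite A" "i \<in> A"
    and max: "\<And>\<beta>. \<beta> \<in> Poly_Mapping.keys u \<Longrightarrow> Poly_Mapping.lookup \<beta> i \<le> Poly_Mapping.lookup \<mu> i"
  shows "Poly_Mapping.lookup ((\<Sum>j\<in>A. var j) * u) (Poly_Mapping.single i 1 + \<mu>)
           = Poly_Mapping.lookup u \<mu>"
proof -
  let ?\<nu> = "Poly_Mapping.single i 1 + \<mu>"
  have other: "Poly_Mapping.lookup (var j * u) ?\<nu> = 0" if "j \<noteq> i" for j
  proof (rule ccontr)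
    assume "Poly_Mapping.lookup (var j * u) ?\<nu> \<noteq> 0"
    then obtain y where y: "y \<in> Poly_Mapping.keys u" "?\<nu> = Poly_Mapping.single j 1 + y"
      using keys_mult[of "var j" u] by (auto simp: in_keys_iff keys_var)
    then have "Poly_Mapping.lookup y i = Poly_Mapping.lookup \<mu> i + 1"
      using that by (metis add.commute add_0 lookup_add lookup_single_eq lookup_single_not_eq)
    then show False using max[OF y(1)] by simp
  qed
  have "Poly_Mapping.lookup ((\<Sum>j\<in>A. var j) * u) ?\<nu> = (\<Sum>j\<in>A. Poly_Mapping.lookup (var j * u) ?\<nu>)"
    by (simp add: sum_distrib_right lookup_sum)
  also have "\<dots> = Poly_Mapping.lookup (var i * u) ?\<nu>"
    using assms(1,2) other by (simp add: sum.remove sum.neutral)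
  also have "\<dots> = Poly_Mapping.lookup u \<mu>"
    unfolding var_def by (simp add: lookup_single_mult)
  finally show ?thesis .
qed

lemma polyring_iff:
  "p \<in> polyring n \<longleftrightarrow> (\<forall>m\<in>Poly_Mapping.keys p. Poly_Mapping.keys m \<subseteq> {..<n})"
  by (simp add: polyring_def)

lemma polyring_zero: "0 \<in> polyring n"
  by (simp add: polyring_def)

lemma polyring_add: "a \<in> polyring n \<Longrightarrow> b \<in> polyring n \<Longrightarrow> a + b \<in> polyring n"
  unfolding polyring_iff by (meson Un_iff keys_add subsetD)

lemma polyring_diff: "a \<in> polyring n \<Longrightarrow> b \<in> polyring n \<Longrightarrow> a - b \<in> polyring n"
  unfolding polyring_iff by (meson Un_iff keys_diff subsetD)

lemma polyring_mult: "a \<in> polyring n \<Longrightarrow> b \<in> polyring n \<Longrightarrow> a * b \<in> polyring n"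
  unfolding polyring_iff using keys_mult[of a b] by (fastforce simp: keys_add_nat)

lemma polyring_single: "Poly_Mapping.keys \<mu> \<subseteq> {..<n} \<Longrightarrow> Poly_Mapping.single \<mu> c \<in> polyring n"
  unfolding polyring_def by simp

lemma polyring_restr: "a \<in> polyring n \<Longrightarrow> restr a A \<in> polyring n"
  unfolding polyring_def by (simp add: keys_restr)

lemma polyring_var: "j < n \<Longrightarrow> var j \<in> polyring n"
  unfolding var_def by (intro polyring_single) simp

lemma keys_sum_vars:
  "\<mu> \<in> Poly_Mapping.keys (\<Sum>j\<in>A. var j :: 'a::field mpoly) \<Longrightarrow> \<exists>j\<in>A. \<mu> = Poly_Mapping.single j 1"
  using keys_sum[of var A] by (auto simp: keys_var)

lemma zero_notin_keys_sum_vars: "0 \<notin> Poly_Mapping.keys (\<Sum>j\<in>A. var j :: 'a::field mpoly)"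
proof -
  have "Poly_Mapping.single j (1::nat) \<noteq> 0" for j
    by (metis lookup_single_eq lookup_zero one_neq_zero)
  then show ?thesis using keys_sum_vars[of 0 A] by metis
qed

lemma polyring_sum_vars: "A \<subseteq> {..<n} \<Longrightarrow> (\<Sum>j\<in>A. var j :: 'a::field mpoly) \<in> polyring n"
  unfolding polyring_iff by (fastforce dest: keys_sum_vars)

section \<open>Monomial ideals\<close>

definition monomial_ideal :: "nat \<Rightarrow> (nat \<Rightarrow>\<^sub>0 nat) set \<Rightarrow> 'a::field mpoly set" where
  "monomial_ideal n Gm = {p \<in> polyring n. \<forall>\<mu>\<in>Poly_Mapping.keys p. \<exists>g\<in>Gm. mdvd g \<mu>}"

lemma monomial_idealI:
  "p \<in> polyring n \<Longrightarrow> (\<And>\<mu>. \<mu> \<in> Poly_Mapping.keys p \<Longrightarrow> \<exists>g\<in>Gm. mdvd g \<mu>) \<Longrightarrow> p \<in> monomial_ideal n Gm"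
  by (simp add: monomial_ideal_def)

lemma monomial_ideal_polyring: "p \<in> monomial_ideal n Gm \<Longrightarrow> p \<in> polyring n"
  by (simp add: monomial_ideal_def)

lemma monomial_ideal_keys: "p \<in> monomial_ideal n Gm \<Longrightarrow> \<mu> \<in> Poly_Mapping.keys p \<Longrightarrow> \<exists>g\<in>Gm. mdvd g \<mu>"
  by (simp add: monomial_ideal_def)

lemma monomial_ideal_add:
  "a \<in> monomial_ideal n Gm \<Longrightarrow> b \<in> monomial_ideal n Gm \<Longrightarrow> a + b \<in> monomial_ideal n Gm"
  using keys_add[of a b] by (auto simp: monomial_ideal_def intro: polyring_add)

lemma monomial_ideal_diff:
  "a \<in> monomial_ideal n Gm \<Longrightarrow> b \<in> monomial_ideal n Gm \<Longrightarrow> a - b \<in> monomial_ideal n Gm"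
  using keys_diff[of a b] by (auto simp: monomial_ideal_def intro: polyring_diff)

lemma monomial_ideal_mult:
  assumes a: "a \<in> monomial_ideal n Gm" and b: "b \<in> polyring n"
  shows "a * b \<in> monomial_ideal n Gm" "b * a \<in> monomial_ideal n Gm"
proof -
  have "a * b \<in> polyring n" using a b monomial_ideal_polyring polyring_mult by blast
  moreover have "\<exists>g\<in>Gm. mdvd g \<mu>" if "\<mu> \<in> Poly_Mapping.keys (a * b)" for \<mu>
    using that keys_mult[of a b] monomial_ideal_keys[OF a] mdvd_add_right by blast
  ultimately show "a * b \<in> monomial_ideal n Gm" "b * a \<in> monomial_ideal n Gm"
    by (simp_all add: monomial_idealI mult.commute)
qed

lemma monomial_ideal_restr:
  "a \<in> polyring n \<Longrightarrow> restr a {\<mu>. \<exists>g\<in>Gm. mdvd g \<mu>} \<in> monomial_ideal n Gm"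
  by (simp add: monomial_ideal_def polyring_restr keys_restr)

lemma monomial_ideal_outside_zero:
  assumes "a \<in> polyring n" "restr a (- {\<mu>. \<exists>g\<in>Gm. mdvd g \<mu>}) = 0"
  shows "a \<in> monomial_ideal n Gm"
  using monomial_ideal_restr[OF assms(1), of Gm] restr_split[of a "{\<mu>. \<exists>g\<in>Gm. mdvd g \<mu>}"] assms(2)
  by (metis add.right_neutral)

lemma monomial_ideal_mdeg:
  assumes "\<forall>g\<in>Gm. d \<le> mdeg g" "p \<in> monomial_ideal n Gm" "\<mu> \<in> Poly_Mapping.keys p"
  shows "d \<le> mdeg \<mu>"
proof -
  obtain g where "g \<in> Gm" "mdvd g \<mu>" using monomial_ideal_keys assms(2,3) by blast
  then have "d \<le> mdeg g" "mdeg g \<le> mdeg \<mu>" using assms(1) by (auto intro: mdeg_mono)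
  then show ?thesis by linarith
qed

lemma ideal_gen_single:
  assumes "g \<in> Gm" "mdvd g \<mu>" "Poly_Mapping.keys \<mu> \<subseteq> {..<n}"
  shows "Poly_Mapping.single \<mu> (c::'a::field) \<in> ideal_gen n (monom ` Gm)"
proof -
  have quotient: "\<mu> - g + g = \<mu>"
    using assms(2) by (intro poly_mapping_eqI) (simp add: lookup_add lookup_minus mdvd_def)
  have "Poly_Mapping.keys (\<mu> - g) \<subseteq> Poly_Mapping.keys \<mu>"
    by (auto simp: in_keys_iff lookup_minus)
  then have "Poly_Mapping.keys (\<mu> - g) \<subseteq> {..<n}" using assms(3) by blast
  then have "\<exists>F cf. Poly_Mapping.single \<mu> c = (\<Sum>h\<in>F. cf h * h) \<and> finite F
      \<and> F \<subseteq> monom ` Gm \<and> (\<forall>h\<in>F. cf h \<in> polyring n)"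
    using assms(1)
    by (intro exI[of _ "{monom g}"] exI[of _ "\<lambda>_. Poly_Mapping.single (\<mu> - g) c"])
      (simp add: monom_def mult_single quotient polyring_single)
  then show ?thesis unfolding ideal_gen_def by simp
qed

lemma ideal_gen_zero: "0 \<in> ideal_gen n G"
  unfolding ideal_gen_def by (rule CollectI, rule exI[of _ "{}"], auto)

lemma ideal_gen_add:
  assumes "x \<in> ideal_gen n G" "y \<in> ideal_gen n G"
  shows "x + y \<in> ideal_gen n G"
proof -
  obtain F1 c1 where 1: "x = (\<Sum>g\<in>F1. c1 g * g)" "finite F1" "F1 \<subseteq> G" "\<forall>g\<in>F1. c1 g \<in> polyring n"
    using assms(1) unfolding ideal_gen_def by blast
  obtain F2 c2 where 2: "y = (\<Sum>g\<in>F2. c2 g * g)" "finite F2" "F2 \<subseteq> G" "\<forall>g\<in>F2. c2 g \<in> polyring n"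
    using assms(2) unfolding ideal_gen_def by blast
  define c where "c g = (if g \<in> F1 then c1 g else 0) + (if g \<in> F2 then c2 g else 0)" for g
  have "(\<Sum>g\<in>F1 \<union> F2. c g * g)
      = (\<Sum>g\<in>F1 \<union> F2. if g \<in> F1 then c1 g * g else 0) + (\<Sum>g\<in>F1 \<union> F2. if g \<in> F2 then c2 g * g else 0)"
    unfolding sum.distrib[symmetric] by (rule sum.cong) (simp_all add: c_def distrib_right)
  also have "\<dots> = x + y"
    using 1 2 by (simp add: sum.inter_restrict[symmetric] Int_absorb1 Int_absorb2)
  finally have "x + y = (\<Sum>g\<in>F1 \<union> F2. c g * g)" by simp
  moreover have "\<forall>g\<in>F1 \<union> F2. c g \<in> polyring n"
    using 1 2 unfolding c_def by (auto intro!: polyring_add simp: polyring_zero)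
  ultimately show ?thesis using 1 2 unfolding ideal_gen_def by blast
qed

lemma ideal_gen_monomials:
  assumes "\<forall>g\<in>Gm. Poly_Mapping.keys g \<subseteq> {..<n}"
  shows "ideal_gen n (monom ` Gm) = (monomial_ideal n Gm :: 'a::field mpoly set)"
proof
  show "ideal_gen n (monom ` Gm) \<subseteq> (monomial_ideal n Gm :: 'a mpoly set)"
  proof
    fix p :: "'a mpoly" assume "p \<in> ideal_gen n (monom ` Gm)"
    then obtain F c where F: "p = (\<Sum>g\<in>F. c g * g)" "F \<subseteq> monom ` Gm" "\<forall>g\<in>F. c g \<in> polyring n"
      unfolding ideal_gen_def by blast
    have "\<forall>g\<in>F. c g * g \<in> monomial_ideal n Gm"
    proof
      fix h assume "h \<in> F"
      then obtain g where g: "g \<in> Gm" "h = monom g" "c h \<in> polyring n" using F by blast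
      have "monom g \<in> (monomial_ideal n Gm :: 'a mpoly set)"
        unfolding monomial_ideal_def monom_def using g(1) assms
        by (auto simp: polyring_single mdvd_def intro!: bexI[of _ g])
      then show "c h * h \<in> monomial_ideal n Gm" using g monomial_ideal_mult by blast
    qed
    then show "p \<in> monomial_ideal n Gm" unfolding F(1)
    proof (induction F rule: infinite_finite_induct)
      case (insert x F)
      then show ?case by (simp add: monomial_ideal_add)
    qed (simp_all add: monomial_ideal_def polyring_def)
  qed
next
  show "(monomial_ideal n Gm :: 'a mpoly set) \<subseteq> ideal_gen n (monom ` Gm)"
  proof
    fix p :: "'a mpoly" assume p: "p \<in> monomial_ideal n Gm"
    have "K \<subseteq> Poly_Mapping.keys p \<Longrightarrow>
        (\<Sum>k\<in>K. Poly_Mapping.single k (Poly_Mapping.lookup p k)) \<in> ideal_gen n (monom ` Gm)" for K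
    proof (induction K rule: infinite_finite_induct)
      case (insert x F)
      then have "x \<in> Poly_Mapping.keys p" by simp
      then obtain g where "g \<in> Gm" "mdvd g x" "Poly_Mapping.keys x \<subseteq> {..<n}"
        using p unfolding monomial_ideal_def polyring_def by blast
      then have "Poly_Mapping.single x (Poly_Mapping.lookup p x) \<in> ideal_gen n (monom ` Gm)"
        by (rule ideal_gen_single)
      with insert show ?case by (simp add: ideal_gen_add)
    qed (simp_all add: ideal_gen_zero)
    then show "p \<in> ideal_gen n (monom ` Gm)"
      using poly_sum_singles[of p] by (metis order_refl)
  qed
qed

lemma ideal_vars:
  assumes "A \<subseteq> {..<n}"
  shows "ideal_gen n (var ` A) =
    {p::'a::field mpoly. p \<in> polyring n \<and> (\<forall>\<mu>\<in>Poly_Mapping.keys p. \<exists>i\<in>A. 0 < Poly_Mapping.lookup \<mu> i)}"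
proof -
  have vars: "var ` A = monom ` ((\<lambda>i. Poly_Mapping.single i (1::nat)) ` A)"
    by (simp add: image_image var_def monom_def)
  have gens: "\<forall>g\<in>(\<lambda>i. Poly_Mapping.single i (1::nat)) ` A. Poly_Mapping.keys g \<subseteq> {..<n}"
    using assms by auto
  show ?thesis
    unfolding vars ideal_gen_monomials[OF gens]
    by (auto simp: monomial_ideal_def mdvd_var mdvd_var[unfolded One_nat_def])
qed

lemma monom_in_ideal_vars:
  assumes "A \<subseteq> {..<n}" "k \<in> A" "0 < Poly_Mapping.lookup m k" "Poly_Mapping.keys m \<subseteq> {..<n}"
  shows "(monom m :: 'a::field mpoly) \<in> ideal_gen n (var ` A)"
  unfolding ideal_vars[OF assms(1)] monom_def using assms(2-4) by (auto simp: polyring_single)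

lemma var_in_ideal_vars:
  assumes "A \<subseteq> {..<n}" "k \<in> A"
  shows "(var k :: 'a::field mpoly) \<in> ideal_gen n (var ` A)"
  using monom_in_ideal_vars[OF assms, of "Poly_Mapping.single k 1"] assms by (auto simp: var_def monom_def)

text \<open>Look at a monomial of minimal degree of the part of a
  outside the ideal: it cannot be cancelled by a v.\<close>
lemma min_mdeg_not_in_mult:
  fixes a v :: "'a::field mpoly"
  assumes "\<mu> \<in> Poly_Mapping.keys a" "\<forall>x\<in>Poly_Mapping.keys a. mdeg \<mu> \<le> mdeg x"
    and "0 \<notin> Poly_Mapping.keys v"
  shows "\<mu> \<in> Poly_Mapping.keys (a - a * v)"
proof -
  have "\<mu> \<notin> Poly_Mapping.keys (a * v)"
  proof
    assume "\<mu> \<in> Poly_Mapping.keys (a * v)"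
    then obtain x y where xy: "x \<in> Poly_Mapping.keys a" "y \<in> Poly_Mapping.keys v" "\<mu> = x + y"
      using keys_mult[of a v] by auto
    have "y \<noteq> 0" using xy(2) assms(3) by auto
    then have "mdeg x < mdeg \<mu>" using xy(3) mdeg_pos[of y] by (simp add: mdeg_add)
    then show False using assms(2) xy(1) by fastforce
  qed
  then show ?thesis using assms(1) by (simp add: in_keys_iff lookup_minus)
qed

lemma monomial_ideal_cancel:
  fixes a v :: "'a::field mpoly"
  assumes a: "a \<in> polyring n" and v: "v \<in> polyring n" and v0: "0 \<notin> Poly_Mapping.keys v"
    and h: "a - a * v \<in> monomial_ideal n Gm"
  shows "a \<in> monomial_ideal n Gm"
proof (rule monomial_ideal_outside_zero[OF a], rule ccontr)
  define D where "D = {\<mu>. \<exists>g\<in>Gm. mdvd g \<mu>}"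
  define a0 where "a0 = restr a (- D)"
  define a1 where "a1 = restr a D"
  assume "restr a (- {\<mu>. \<exists>g\<in>Gm. mdvd g \<mu>}) \<noteq> 0"
  then have "Poly_Mapping.keys a0 \<noteq> {}" by (simp add: a0_def D_def)
  then obtain \<mu>0 where "\<mu>0 \<in> Poly_Mapping.keys a0" by blast
  then obtain \<mu> where \<mu>: "\<mu> \<in> Poly_Mapping.keys a0" "\<forall>x\<in>Poly_Mapping.keys a0. mdeg \<mu> \<le> mdeg x"
    using ex_has_least_nat[of "\<lambda>x. x \<in> Poly_Mapping.keys a0" \<mu>0 mdeg] by blast
  have a1J: "a1 \<in> monomial_ideal n Gm" unfolding a1_def D_def using a by (rule monomial_ideal_restr)
  have split: "a = a1 + a0" unfolding a0_def a1_def by (rule restr_split)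
  have "a0 - a0 * v = (a - a * v) - (a1 - a1 * v)"
    unfolding split by (simp add: algebra_simps)
  also have "\<dots> \<in> monomial_ideal n Gm"
    by (rule monomial_ideal_diff[OF h monomial_ideal_diff[OF a1J monomial_ideal_mult(1)[OF a1J v]]])
  finally have "\<mu> \<in> D"
    using min_mdeg_not_in_mult[OF \<mu> v0] monomial_ideal_keys by (auto simp: D_def)
  then show False using \<mu>(1) by (simp add: a0_def keys_restr)
qed

lemma seq_times_single: "seq_times [f] M = {f * u | u. u \<in> M}"
proof
  show "seq_times [f] M \<subseteq> {f * u | u. u \<in> M}"
    unfolding seq_times_def by auto
  show "{f * u | u. u \<in> M} \<subseteq> seq_times [f] M"
  proof
    fix x assume "x \<in> {f * u | u. u \<in> M}"
    then obtain u where "x = f * u" "u \<in> M" by blast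
    then show "x \<in> seq_times [f] M" unfolding seq_times_def
      by (intro CollectI exI[of _ "\<lambda>_. u"]) simp
  qed
qed

lemma set_plus_seq_times_Nil: "set_plus J (seq_times [] M) = J"
  unfolding set_plus_def seq_times_def by simp

abbreviation maxideal :: "nat \<Rightarrow> 'a::field mpoly set" where
  "maxideal n \<equiv> ideal_gen n (var ` {..<n})"

lemma quot_regular_seq_single:
  assumes "f \<in> maxideal n" "\<forall>u\<in>I. f * u \<in> J \<longrightarrow> u \<in> J" "\<not> I \<subseteq> set_plus J {f * u | u. u \<in> I}"
  shows "quot_regular_seq n I J [f]"
  using assms unfolding quot_regular_seq_def by (simp add: set_plus_seq_times_Nil seq_times_single)

lemma quot_regular_seq_pair:
  assumes "quot_regular_seq n I J fs" "2 \<le> length fs"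
  shows "fs ! 0 \<in> maxideal n" "fs ! 1 \<in> maxideal n"
    and "\<forall>u\<in>I. fs ! 0 * u \<in> J \<longrightarrow> u \<in> J"
    and "\<forall>u\<in>I. fs ! 1 * u \<in> set_plus J {fs ! 0 * v | v. v \<in> I}
           \<longrightarrow> u \<in> set_plus J {fs ! 0 * v | v. v \<in> I}"
proof -
  have reg: "\<And>i u. i < length fs \<Longrightarrow> u \<in> I \<Longrightarrow> fs ! i * u \<in> set_plus J (seq_times (take i fs) I)
      \<Longrightarrow> u \<in> set_plus J (seq_times (take i fs) I)"
    using assms(1) unfolding quot_regular_seq_def by blast
  have "fs \<noteq> []" "take 1 fs = [fs ! 0]" using assms(2) by (cases fs; simp)+
  then show "\<forall>u\<in>I. fs ! 0 * u \<in> J \<longrightarrow> u \<in> J"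
    "\<forall>u\<in>I. fs ! 1 * u \<in> set_plus J {fs ! 0 * v | v. v \<in> I}
       \<longrightarrow> u \<in> set_plus J {fs ! 0 * v | v. v \<in> I}"
    using reg[of 0] reg[of 1] assms(2) by (auto simp: set_plus_seq_times_Nil seq_times_single)
  have "fs ! 0 \<in> set fs" by (rule nth_mem) (use assms(2) in linarith)
  moreover have "fs ! 1 \<in> set fs" by (rule nth_mem) (use assms(2) in linarith)
  ultimately show "fs ! 0 \<in> maxideal n" "fs ! 1 \<in> maxideal n"
    using assms(1) unfolding quot_regular_seq_def by blast+
qed

lemma depth_quot_eq_one:
  assumes "quot_regular_seq n I J [f]" "\<And>fs. quot_regular_seq n I J fs \<Longrightarrow> length fs \<le> 1"
  shows "depth_quot n I J = 1"
  unfolding depth_quot_def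
proof (rule cSup_eq_maximum)
  show "1 \<in> {length fs |fs. quot_regular_seq n I J fs}" using assms(1) by force
qed (use assms(2) in blast)

section \<open>The depth of I/J is at least one\<close>

lemma sum_vars_nonzerodivisor:
  fixes u :: "'a::field mpoly"
  assumes A: "finite A" "A \<subseteq> {..<n}" and sqfree: "\<forall>g\<in>Gm. sqfree g"
    and u: "u \<in> ideal_gen n (var ` A)" and fu: "(\<Sum>j\<in>A. var j) * u \<in> monomial_ideal n Gm"
  shows "u \<in> monomial_ideal n Gm"
proof -
  define D where "D = {\<mu>. \<exists>g\<in>Gm. mdvd g \<mu>}"
  define u0 where "u0 = restr u (- D)"
  define u1 where "u1 = restr u D"
  have uP: "u \<in> polyring n" using u ideal_vars[OF A(2)] by auto
  have fP: "(\<Sum>j\<in>A. var j) \<in> polyring n" using A(2) by (rule polyring_sum_vars)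
  have u1J: "u1 \<in> monomial_ideal n Gm" unfolding u1_def D_def using uP by (rule monomial_ideal_restr)
  have split: "u = u1 + u0" unfolding u0_def u1_def by (rule restr_split)
  have "(\<Sum>j\<in>A. var j) * u0 = (\<Sum>j\<in>A. var j) * u - (\<Sum>j\<in>A. var j) * u1"
    unfolding split by (simp add: algebra_simps)
  also have "\<dots> \<in> monomial_ideal n Gm"
    using fu monomial_ideal_mult(2)[OF u1J fP] by (rule monomial_ideal_diff)
  finally have fu0: "(\<Sum>j\<in>A. var j) * u0 \<in> monomial_ideal n Gm" .
  have "u0 = 0"
  proof (rule ccontr)
    assume "u0 \<noteq> 0"
    then obtain \<mu>0 where \<mu>0: "\<mu>0 \<in> Poly_Mapping.keys u0" by (metis keys_eq_empty ex_in_conv)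
    then obtain i where i: "i \<in> A" "0 < Poly_Mapping.lookup \<mu>0 i"
      using u ideal_vars[OF A(2)] by (auto simp: u0_def keys_restr)
    define e where "e = Max ((\<lambda>\<beta>. Poly_Mapping.lookup \<beta> i) ` Poly_Mapping.keys u0)"
    have "e \<in> (\<lambda>\<beta>. Poly_Mapping.lookup \<beta> i) ` Poly_Mapping.keys u0"
      unfolding e_def using \<mu>0 by (intro Max_in) auto
    then obtain \<mu> where \<mu>: "\<mu> \<in> Poly_Mapping.keys u0" and e: "Poly_Mapping.lookup \<mu> i = e" by auto
    have max: "Poly_Mapping.lookup \<beta> i \<le> Poly_Mapping.lookup \<mu> i" if "\<beta> \<in> Poly_Mapping.keys u0" for \<beta>
      unfolding e e_def using that by (intro Max_ge) auto
    have "Poly_Mapping.lookup ((\<Sum>j\<in>A. var j) * u0) (Poly_Mapping.single i 1 + \<mu>)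
        = Poly_Mapping.lookup u0 \<mu>"
      using A(1) i(1) max by (rule lookup_sum_vars_mult)
    then have "Poly_Mapping.lookup ((\<Sum>j\<in>A. var j) * u0) (Poly_Mapping.single i 1 + \<mu>) \<noteq> 0"
      using \<mu> by (simp add: in_keys_iff)
    then obtain g where g: "g \<in> Gm" "mdvd g (Poly_Mapping.single i 1 + \<mu>)"
      using monomial_ideal_keys[OF fu0] by (auto simp: in_keys_iff)
    have "0 < Poly_Mapping.lookup \<mu> i" using max[OF \<mu>0] i(2) by simp
    then have "mdvd g \<mu>" using sqfree g by (intro sqfree_mdvd_cancel[OF _ g(2)]) auto
    then have "\<mu> \<in> D" using g(1) by (auto simp: D_def)
    then show False using \<mu> by (simp add: u0_def keys_restr)
  qed
  then show ?thesis using split u1J by simp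
qed

text \<open>If J is generated in degrees \<ge> 2, then no variable lies in J + (f v) with f, v without
  constant terms: all monomials there have degree at least two.\<close>
lemma var_notin_deg2:
  assumes Gm: "\<forall>g\<in>Gm. 2 \<le> mdeg g" and p: "p \<in> monomial_ideal n Gm"
    and f: "0 \<notin> Poly_Mapping.keys f" and v: "0 \<notin> Poly_Mapping.keys v"
  shows "var k \<noteq> p + f * v"
proof
  let ?x = "Poly_Mapping.single k (1::nat)"
  assume "var k = p + f * v"
  then have "?x \<in> Poly_Mapping.keys (p + f * v)" by (metis keys_var singletonI)
  then consider "?x \<in> Poly_Mapping.keys p" | "?x \<in> Poly_Mapping.keys (f * v)"
    using keys_add[of p "f * v"] by blast
  then have "2 \<le> mdeg ?x"
  proof cases
    case 1
    then show ?thesis using monomial_ideal_mdeg[OF Gm p] by blast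
  next
    case 2
    then obtain x y where xy: "x \<in> Poly_Mapping.keys f" "y \<in> Poly_Mapping.keys v" "?x = x + y"
      using keys_mult[of f v] by blast
    have "x \<noteq> 0" "y \<noteq> 0" using xy f v by auto
    then show ?thesis using mdeg_pos[of x] mdeg_pos[of y] xy(3) by (simp add: mdeg_add)
  qed
  then show False by simp
qed

lemma sum_vars_regular:
  assumes r: "0 < r" "r \<le> n"
    and Gm: "\<forall>g\<in>Gm. sqfree g \<and> 2 \<le> mdeg g"
  shows "quot_regular_seq n (ideal_gen n (var ` {..<r})) (monomial_ideal n Gm) [\<Sum>j<r. var j]"
proof (rule quot_regular_seq_single)
  let ?I = "ideal_gen n (var ` {..<r}) :: 'a mpoly set"
  let ?f = "\<Sum>j<r. var j :: 'a mpoly"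
  have I: "?I = {p. p \<in> polyring n \<and> (\<forall>\<mu>\<in>Poly_Mapping.keys p. \<exists>i\<in>{..<r}. 0 < Poly_Mapping.lookup \<mu> i)}"
    using ideal_vars[of "{..<r}" n] r by simp
  show "?f \<in> maxideal n"
    unfolding ideal_vars[OF order_refl]
  proof (intro CollectI conjI ballI)
    show "?f \<in> polyring n" using r by (intro polyring_sum_vars) auto
    fix \<mu> assume "\<mu> \<in> Poly_Mapping.keys ?f"
    then obtain j where j: "j < r" "\<mu> = Poly_Mapping.single j 1" using keys_sum_vars by blast
    then have "j \<in> {..<n}" "0 < Poly_Mapping.lookup \<mu> j" using r by auto
    then show "\<exists>i\<in>{..<n}. 0 < Poly_Mapping.lookup \<mu> i" by blast
  qed
  show "\<forall>u\<in>?I. ?f * u \<in> monomial_ideal n Gm \<longrightarrow> u \<in> monomial_ideal n Gm"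
    using sum_vars_nonzerodivisor[of "{..<r}" n Gm] r Gm by auto
  show "\<not> ?I \<subseteq> set_plus (monomial_ideal n Gm) {?f * u |u. u \<in> ?I}"
  proof
    assume cover: "?I \<subseteq> set_plus (monomial_ideal n Gm) {?f * u |u. u \<in> ?I}"
    have "var 0 \<in> ?I" using r by (intro var_in_ideal_vars) auto
    with cover have "var 0 \<in> set_plus (monomial_ideal n Gm) {?f * u |u. u \<in> ?I}" by (rule subsetD)
    then obtain p v where p: "p \<in> monomial_ideal n Gm" and v: "v \<in> ?I" and x0: "var 0 = p + ?f * v"
      unfolding set_plus_def by blast
    have "0 \<notin> Poly_Mapping.keys ?f" using zero_notin_keys_sum_vars .
    moreover have "0 \<notin> Poly_Mapping.keys v" using v by (auto simp: I)
    ultimately show False using var_notin_deg2[of Gm p n ?f v 0] Gm p x0 by blast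
  qed
qed

section \<open>The depth of I/J is at most one\<close>

lemma cross_mult_in_ideal:
  fixes q u :: "'a::field mpoly"
  assumes cross: "\<And>i j. i < r \<Longrightarrow> r \<le> j \<Longrightarrow> j < n \<Longrightarrow>
      (\<exists>g\<in>Gm. mdvd g (Poly_Mapping.single i 1 + Poly_Mapping.single j 1))"
    and r: "r \<le> n" and q: "q \<in> polyring n"
    and q_high: "\<forall>\<alpha>\<in>Poly_Mapping.keys q. \<exists>j\<ge>r. 0 < Poly_Mapping.lookup \<alpha> j"
    and u: "u \<in> ideal_gen n (var ` {..<r})"
  shows "q * u \<in> monomial_ideal n Gm"
proof (rule monomial_idealI)
  have uP: "u \<in> polyring n" and u_low: "\<forall>\<beta>\<in>Poly_Mapping.keys u. \<exists>i<r. 0 < Poly_Mapping.lookup \<beta> i"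
    using u ideal_vars[of "{..<r}" n] r by auto
  show "q * u \<in> polyring n" using q uP by (rule polyring_mult)
  fix \<mu> assume "\<mu> \<in> Poly_Mapping.keys (q * u)"
  then obtain x y where xy: "x \<in> Poly_Mapping.keys q" "y \<in> Poly_Mapping.keys u" "\<mu> = x + y"
    using keys_mult[of q u] by blast
  obtain j where j: "r \<le> j" "0 < Poly_Mapping.lookup x j" using q_high xy(1) by blast
  then have "j \<in> Poly_Mapping.keys x" by (simp add: in_keys_iff)
  then have "j < n" using q xy(1) unfolding polyring_iff by blast
  moreover obtain i where i: "i < r" "0 < Poly_Mapping.lookup y i" using u_low xy(2) by blast
  ultimately obtain g where g: "g \<in> Gm" "mdvd g (Poly_Mapping.single i 1 + Poly_Mapping.single j 1)"
    using cross j(1) by blast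
  have "mdvd (Poly_Mapping.single i 1 + Poly_Mapping.single j 1) \<mu>"
    using i j xy(3) by (auto simp: mdvd_def lookup_add lookup_single when_def)
  then show "\<exists>g\<in>Gm. mdvd g \<mu>" using g mdvd_trans by blast
qed

lemma no_regular_pair:
  fixes n r k :: nat and Gm and f1 f2 :: "'a::field mpoly"
  defines "I \<equiv> ideal_gen n (var ` {..<r})" and "J \<equiv> monomial_ideal n Gm"
  assumes cross: "\<And>i j. i < r \<Longrightarrow> r \<le> j \<Longrightarrow> j < n \<Longrightarrow>
      (\<exists>g\<in>Gm. mdvd g (Poly_Mapping.single i 1 + Poly_Mapping.single j 1))"
    and r: "k < r" "r \<le> n" and xk: "var k \<notin> J"
    and f: "f1 \<in> maxideal n" "f2 \<in> maxideal n"
    and reg1: "\<forall>u\<in>I. f1 * u \<in> J \<longrightarrow> u \<in> J"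
    and reg2: "\<forall>u\<in>I. f2 * u \<in> set_plus J {f1 * v | v. v \<in> I} \<longrightarrow> u \<in> set_plus J {f1 * v | v. v \<in> I}"
  shows False
proof -
  have I_iff: "p \<in> I \<longleftrightarrow> p \<in> polyring n \<and> (\<forall>\<mu>\<in>Poly_Mapping.keys p. \<exists>i\<in>{..<r}. 0 < Poly_Mapping.lookup \<mu> i)" for p
  proof -
    have "{..<r} \<subseteq> {..<n}" using r by auto
    then show ?thesis unfolding I_def ideal_vars[OF \<open>{..<r} \<subseteq> {..<n}\<close>] by simp
  qed
  have M_iff: "p \<in> maxideal n \<longleftrightarrow> p \<in> polyring n \<and> (\<forall>\<mu>\<in>Poly_Mapping.keys p. \<exists>i\<in>{..<n}. 0 < Poly_Mapping.lookup \<mu> i)" for p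
    unfolding ideal_vars[OF order_refl] by simp
  text \<open>Split a polynomial of the maximal ideal into its part in K[x_i : i < r], which lies in I,
    and the rest, which multiplies I into J.\<close>
  define low where "low = {\<mu>::nat \<Rightarrow>\<^sub>0 nat. Poly_Mapping.keys \<mu> \<subseteq> {..<r}}"
  have low_part: "restr p low \<in> I" if p: "p \<in> maxideal n" for p
    unfolding I_iff
  proof (intro conjI ballI)
    show "restr p low \<in> polyring n" using p M_iff polyring_restr by blast
    fix \<mu> assume "\<mu> \<in> Poly_Mapping.keys (restr p low)"
    then have \<mu>: "\<mu> \<in> Poly_Mapping.keys p" "Poly_Mapping.keys \<mu> \<subseteq> {..<r}"
      by (auto simp: keys_restr low_def)
    then obtain i where i: "0 < Poly_Mapping.lookup \<mu> i" using p M_iff by blast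
    then have "i \<in> Poly_Mapping.keys \<mu>" by (simp add: in_keys_iff)
    then show "\<exists>i\<in>{..<r}. 0 < Poly_Mapping.lookup \<mu> i" using i \<mu>(2) by blast
  qed
  have high_part: "restr p (- low) * u \<in> J" if "p \<in> maxideal n" "u \<in> I" for p u
  proof (unfold J_def, rule cross_mult_in_ideal[OF cross r(2)])
    show "restr p (- low) \<in> polyring n" using that M_iff polyring_restr by blast
    show "\<forall>\<alpha>\<in>Poly_Mapping.keys (restr p (- low)). \<exists>j\<ge>r. 0 < Poly_Mapping.lookup \<alpha> j"
      by (auto simp: keys_restr low_def in_keys_iff not_less)
  qed (use that I_def in auto)
  define a b c d where "a = restr f1 low" "b = restr f1 (- low)" "c = restr f2 low" "d = restr f2 (- low)"
  have f1: "f1 = a + b" and f2: "f2 = c + d" unfolding a_b_c_d_def by (rule restr_split)+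
  have aI: "a \<in> I" and cI: "c \<in> I" unfolding a_b_c_d_def using f by (auto intro: low_part)
  have bJ: "b * u \<in> J" and dJ: "d * u \<in> J" if "u \<in> I" for u
    unfolding a_b_c_d_def using f that by (auto intro: high_part)
  text \<open>Since f2 a = (d a - b c) + f1 c lies in J + f1 I, so does a.\<close>
  have "f2 * a = (d * a - b * c) + f1 * c" unfolding f1 f2 by (simp add: algebra_simps)
  moreover have "d * a - b * c \<in> J" unfolding J_def using dJ[OF aI] bJ[OF cI] J_def
    by (intro monomial_ideal_diff) auto
  ultimately have "f2 * a \<in> set_plus J {f1 * v | v. v \<in> I}"
    unfolding set_plus_def using cI by blast
  then obtain p v where p: "p \<in> J" and v: "v \<in> I" and a: "a = p + f1 * v"
    using reg2 aI unfolding set_plus_def by blast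
  text \<open>Then a - a v = p + b v lies in J, and the cancellation lemma gives a \<in> J.\<close>
  have "a - a * v = p + b * v" using a unfolding f1 by (simp add: algebra_simps)
  then have "a - a * v \<in> J" using p bJ[OF v] unfolding J_def by (simp add: monomial_ideal_add)
  moreover have "v \<in> polyring n" "0 \<notin> Poly_Mapping.keys v" using v I_iff by fastforce+
  ultimately have aJ: "a \<in> J"
    using aI I_iff monomial_ideal_cancel unfolding J_def by blast
  text \<open>Hence f1 x_k = a x_k + b x_k \<in> J, so x_k \<in> J by regularity of f1.\<close>
  have xkI: "var k \<in> I" unfolding I_def using r by (intro var_in_ideal_vars) auto
  have "f1 * var k = a * var k + b * var k" unfolding f1 by (simp add: algebra_simps)
  also have "\<dots> \<in> J"
    using monomial_ideal_add[OF monomial_ideal_mult(1)[OF aJ[unfolded J_def] polyring_var] bJ[OF xkI, unfolded J_def]] r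
    unfolding J_def by simp
  finally show False using reg1 xkI xk by blast
qed

lemma var_pair:
  assumes "i \<noteq> j"
  defines "m \<equiv> Poly_Mapping.single i 1 + Poly_Mapping.single j (1::nat)"
  shows "sqfree m" "mdeg m = 2" "Poly_Mapping.keys m = {i, j}"
proof -
  have lm: "Poly_Mapping.lookup m k = (if k = i \<or> k = j then 1 else 0)" for k
    unfolding m_def using assms(1) by (auto simp: lookup_add lookup_single when_def)
  show "sqfree m" unfolding sqfree_def lm by simp
  show "mdeg m = 2" unfolding m_def by (simp add: mdeg_add)
  show "Poly_Mapping.keys m = {i, j}" by (auto simp: in_keys_iff lm split: if_splits)
qed

lemma monomial_exponents:
  assumes "G \<subseteq> {monom m | m. P m}"
  shows "G = monom ` {m. (monom m :: 'a::field mpoly) \<in> G}" "\<forall>m. (monom m :: 'a mpoly) \<in> G \<longrightarrow> P m"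
proof -
  have monom_inj: "monom a = (monom b :: 'a mpoly) \<Longrightarrow> a = b" for a b
    unfolding monom_def by (metis lookup_single_eq lookup_single_not_eq one_neq_zero)
  show "G = monom ` {m. (monom m :: 'a mpoly) \<in> G}" using assms by auto
  show "\<forall>m. (monom m :: 'a mpoly) \<in> G \<longrightarrow> P m" using assms monom_inj by blast
qed

text \<open>The hypothesis of the theorem on square free quadrics: a product x_i x_j with
  i < r \<le> j lies in I but not in K[x_i : i < r], so it must lie in J.\<close>
lemma cross_products_in_ideal:
  fixes J :: "'a::field mpoly set"
  assumes J: "J = monomial_ideal n Gm" and r: "r \<le> n"
    and hyp: "\<forall>m. sqfree m \<and> mdeg m = 2 \<and> Poly_Mapping.keys m \<subseteq> {..<n} \<and>
            monom m \<in> ideal_gen n (var ` {..<r}) \<and> monom m \<notin> J \<longrightarrow> Poly_Mapping.keys m \<subseteq> {..<r}"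
    and ij: "i < r" "r \<le> j" "j < n"
  shows "\<exists>g\<in>Gm. mdvd g (Poly_Mapping.single i 1 + Poly_Mapping.single j 1)"
proof -
  let ?m = "Poly_Mapping.single i 1 + Poly_Mapping.single j (1::nat)"
  have m: "sqfree ?m" "mdeg ?m = 2" "Poly_Mapping.keys ?m = {i, j}"
    using var_pair[of i j] ij by auto
  have kn: "Poly_Mapping.keys ?m \<subseteq> {..<n}" and kr: "\<not> Poly_Mapping.keys ?m \<subseteq> {..<r}"
    using m(3) ij by auto
  have I: "{..<r} \<subseteq> {..<n}" using r by auto
  have i: "i \<in> {..<r}" "0 < Poly_Mapping.lookup ?m i" using ij by (auto simp: lookup_add)
  have "monom ?m \<in> J"
  proof (rule ccontr)
    assume "monom ?m \<notin> J"
    then have "Poly_Mapping.keys ?m \<subseteq> {..<r}"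
      using hyp[rule_format, OF conjI[OF m(1) conjI[OF m(2) conjI[OF kn
            conjI[OF monom_in_ideal_vars[OF I i kn]]]]]] by blast
    with kr show False ..
  qed
  then show ?thesis using J monomial_ideal_keys by (fastforce simp: monom_def)
qed

theorem lemma1p13:
  fixes n r :: nat and J :: "'a::field mpoly set"
  assumes "1 \<le> r" and "r \<le> n"
    and "J = ideal_gen n G"
    and "G \<subseteq> {monom m | m. sqfree m \<and> mdeg m \<ge> 2 \<and> Poly_Mapping.keys m \<subseteq> {..<n}}"
    and "J \<noteq> {0}"
    and "J \<subset> ideal_gen n (var ` {..<r})"
    and "\<forall>m. sqfree m \<and> mdeg m = 2 \<and> Poly_Mapping.keys m \<subseteq> {..<n} \<and>
            monom m \<in> ideal_gen n (var ` {..<r}) \<and> monom m \<notin> J \<longrightarrow> Poly_Mapping.keys m \<subseteq> {..<r}"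
  shows "depth_quot n (ideal_gen n (var ` {..<r})) J = 1"
proof -
  define Gm where "Gm = {m. (monom m :: 'a mpoly) \<in> G}"
  have Gm: "\<forall>g\<in>Gm. sqfree g \<and> 2 \<le> mdeg g \<and> Poly_Mapping.keys g \<subseteq> {..<n}"
    using monomial_exponents(2)[OF assms(4)] by (simp add: Gm_def)
  have G: "G = monom ` Gm" unfolding Gm_def by (rule monomial_exponents(1)[OF assms(4)])
  have J: "J = monomial_ideal n Gm"
    unfolding assms(3) G using Gm by (intro ideal_gen_monomials) blast
  have cross: "\<exists>g\<in>Gm. mdvd g (Poly_Mapping.single i 1 + Poly_Mapping.single j 1)"
    if "i < r" "r \<le> j" "j < n" for i j
    using cross_products_in_ideal[OF J assms(2,7) that] .
  have x0: "var 0 \<notin> J"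
    using var_notin_deg2[of Gm _ n 0 0 0] Gm J by auto
  show ?thesis
  proof (rule depth_quot_eq_one)
    show "quot_regular_seq n (ideal_gen n (var ` {..<r})) J [\<Sum>j<r. var j]"
      unfolding J by (rule sum_vars_regular) (use assms(1,2) Gm in auto)
    show "length fs \<le> 1" if reg: "quot_regular_seq n (ideal_gen n (var ` {..<r})) J fs" for fs
    proof (rule ccontr)
      assume "\<not> length fs \<le> 1"
      then have "2 \<le> length fs" by simp
      from quot_regular_seq_pair[OF reg this] show False
        using no_regular_pair[OF cross _ assms(2) x0[unfolded J]] assms(1) unfolding J by auto
    qed
  qed
qed

end
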